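(* Let $\alpha \in [0,1)$. For every $k \in \{1,\dots,m-2\}$, with $\mathbf{S}_k = (S_k,\dots,S_k)$, $$S_{\min}\sqrt[n]{1-\alpha} + S_k\left(1 - \sqrt[n]{1-\alpha}\right) \le B_{T_h}^*(\mathbf{S}_k) \le S_{\min}\sqrt[n]{1-\alpha} + S_{k+1}\left(1 - \sqrt[n]{1-\alpha}\right).$$
   Context: Fix integers $m \ge 3$, $n \ge 1$ and reals $S_{\min} < S_{\max}$; $S = \{S_0,\dots,S_{m-1}\}$ with $S_k = S_{\min} + k\frac{S_{\max}-S_{\min}}{m-1}$. $\mathcal{F}$ is the set of probability distributions on $S$, identified with the probability simplex in $\mathbb{R}^m$ with the Euclidean topology; $E[F]$ is the mean. $\Omega$ is the set of samples of size $n$ from $S$, identified with their sorted versions $x_{(1)} \le \dots \le x_{(n)}$. $P_F[\Omega']$ is the probability that the sorted sample of $n$ i.i.d. draws from $F$ lies in $\Omega' \subseteq \Omega$; $\mathcal{G}(\Omega',\alpha) = \{F : P_F[\Omega'] > \alpha\}$ and $\mathcal{F}(\Omega',\alpha)$ is its closure. The high lexicographic order $T_h$: $\mathbf{x} \le_{T_h} \mathbf{y}$ iff $\mathbf{x}=\mathbf{y}$ or at the largest index $j$ with $x_{(j)} \ne y_{(j)}$ we have $x_{(j)} < y_{(j)}$. $\Omega(\mathbf{x},T_h) = \{\mathbf{y} : \mathbf{x} \le_{T_h} \mathbf{y}\}$ and $B_{T_h}^*(\mathbf{x}) = \min\{E[F] : F \in \mathcal{F}(\Omega(\mathbf{x},T_h),\alpha)\}$.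 *)

theory Defs
  imports "HOL-Analysis.Analysis"
begin

definition Spt :: "nat \<Rightarrow> real \<Rightarrow> real \<Rightarrow> nat \<Rightarrow> real" where
  "Spt m Smin Smax k = Smin + real k * (Smax - Smin) / (real m - 1)"

definition distrs :: "nat \<Rightarrow> (nat \<Rightarrow> real) set" where
  "distrs m = {F. (\<forall>i<m. 0 \<le> F i) \<and> (\<Sum>i<m. F i) = 1 \<and> (\<forall>i\<ge>m. F i = 0)}"

definition mean :: "nat \<Rightarrow> real \<Rightarrow> real \<Rightarrow> (nat \<Rightarrow> real) \<Rightarrow> real" where
  "mean m Smin Smax F = (\<Sum>i<m. F i * Spt m Smin Smax i)"

definition samples :: "nat \<Rightarrow> nat \<Rightarrow> real \<Rightarrow> real \<Rightarrow> real list set" where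
  "samples m n Smin Smax = {x. length x = n \<and> sorted x \<and> set x \<subseteq> Spt m Smin Smax ` {..<m}}"

text \<open>P_F[Omega']: probability that the sorted sample of n iid draws from F lies in Omega'.
  Sum over all ordered draw sequences (lists of indices) of their probabilities.\<close>
definition probF :: "nat \<Rightarrow> nat \<Rightarrow> real \<Rightarrow> real \<Rightarrow> (nat \<Rightarrow> real) \<Rightarrow> real list set \<Rightarrow> real" where
  "probF m n Smin Smax F \<Omega>' =
     (\<Sum>w\<in>{w. length w = n \<and> set w \<subseteq> {..<m}}.
        if sort (map (Spt m Smin Smax) w) \<in> \<Omega>' then (\<Prod>i<n. F (w ! i)) else 0)"

definition Gset :: "nat \<Rightarrow> nat \<Rightarrow> real \<Rightarrow> real \<Rightarrow> real list set \<Rightarrow> real \<Rightarrow> (nat \<Rightarrow> real) set" where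
  "Gset m n Smin Smax \<Omega>' \<alpha> = {F \<in> distrs m. probF m n Smin Smax F \<Omega>' > \<alpha>}"

definition Fset :: "nat \<Rightarrow> nat \<Rightarrow> real \<Rightarrow> real \<Rightarrow> real list set \<Rightarrow> real \<Rightarrow> (nat \<Rightarrow> real) set" where
  "Fset m n Smin Smax \<Omega>' \<alpha> = {F. (\<forall>i\<ge>m. F i = 0) \<and>
     (\<forall>\<epsilon>>0. \<exists>G\<in>Gset m n Smin Smax \<Omega>' \<alpha>. sqrt (\<Sum>i<m. (F i - G i)\<^sup>2) < \<epsilon>)}"

definition le_Th :: "nat \<Rightarrow> real list \<Rightarrow> real list \<Rightarrow> bool" where
  "le_Th n x y \<longleftrightarrow> x = y \<or>
     (\<exists>j<n. x ! j \<noteq> y ! j \<and> (\<forall>i. j < i \<and> i < n \<longrightarrow> x ! i = y ! i) \<and> x ! j < y ! j)"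

definition OmegaTh :: "nat \<Rightarrow> nat \<Rightarrow> real \<Rightarrow> real \<Rightarrow> real list \<Rightarrow> real list set" where
  "OmegaTh m n Smin Smax x = {y \<in> samples m n Smin Smax. le_Th n x y}"

definition Bstar :: "nat \<Rightarrow> nat \<Rightarrow> real \<Rightarrow> real \<Rightarrow> real \<Rightarrow> real list \<Rightarrow> real" where
  "Bstar m n Smin Smax \<alpha> x =
     Inf (mean m Smin Smax ` Fset m n Smin Smax (OmegaTh m n Smin Smax x) \<alpha>)"

end

theory Submission
  imports Defs
begin

text \<open>
  Let \<Omega> be the set of samples that are T_h-above (S_k, ..., S_k) and put r = (1 - \<alpha>)^(1/n).
  A sample all of whose points lie below S_k misses \<Omega>, so a distribution F with
  P_F[\<Omega>] > \<alpha> satisfies F{S_0, ..., S_(k-1)}^n < 1 - \<alpha>: it puts mass less than r below S_k,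
  hence its mean is at least Smin r + S_k (1 - r), and this bound passes to the closure because
  the mean is continuous. Conversely, every sample containing S_(k+1) lies in \<Omega>, so the
  distribution with mass p < r at Smin and 1 - p at S_(k+1) misses \<Omega> only on the constant
  sample (Smin, ..., Smin), of probability p^n < 1 - \<alpha>. Letting p tend to r gives a point of
  the closure with mean Smin r + S_(k+1) (1 - r).
\<close>

section \<open>Words and the probabilities of sample events\<close>

definition words :: "'a set \<Rightarrow> nat \<Rightarrow> 'a list set" where
  "words A n = {w. length w = n \<and> set w \<subseteq> A}"

lemma finite_words: "finite A \<Longrightarrow> finite (words A n)"
  using finite_lists_length_eq[of A n] by (simp add: words_def conj_commute)

lemma words_Suc: "words A (Suc n) = (\<lambda>(x, w). x # w) ` (A \<times> words A n)"
proof
  show "words A (Suc n) \<subseteq> (\<lambda>(x, w). x # w) ` (A \<times> words A n)"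
  proof
    fix w assume "w \<in> words A (Suc n)"
    then obtain x v where "w = x # v" "x \<in> A" "v \<in> words A n"
      unfolding words_def by (cases w) auto
    then show "w \<in> (\<lambda>(x, w). x # w) ` (A \<times> words A n)" by force
  qed
qed (auto simp: words_def)

lemma sum_prod_words:
  fixes F :: "'a \<Rightarrow> 'b::comm_semiring_1"
  assumes "finite A"
  shows "(\<Sum>w\<in>words A n. \<Prod>i<n. F (w ! i)) = sum F A ^ n"
proof (induction n)
  case 0
  have "words A 0 = {[]}" by (auto simp: words_def)
  then show ?case by simp
next
  case (Suc n)
  have inj: "inj_on (\<lambda>(x, w). x # w) (A \<times> words A n)"
    by (auto simp: inj_on_def)
  have "(\<Sum>w\<in>words A (Suc n). \<Prod>i<Suc n. F (w ! i))
      = (\<Sum>(x, w)\<in>A \<times> words A n. F x * (\<Prod>i<n. F (w ! i)))"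
    unfolding words_Suc sum.reindex[OF inj]
    by (simp add: case_prod_beta prod.lessThan_Suc_shift del: prod.lessThan_Suc)
  also have "\<dots> = (\<Sum>x\<in>A. F x * sum F A ^ n)"
    by (simp add: sum.cartesian_product[symmetric] sum_distrib_left[symmetric] Suc.IH)
  also have "\<dots> = sum F A ^ Suc n"
    by (simp add: sum_distrib_right[symmetric])
  finally show ?case .
qed

lemma sum_words_subset:
  assumes "finite A" "B \<subseteq> A"
  shows "(\<Sum>w\<in>words A n. if set w \<subseteq> B then f w else 0) = (\<Sum>w\<in>words B n. f w)"
proof -
  have "{w \<in> words A n. set w \<subseteq> B} = words B n"
    using assms(2) by (auto simp: words_def)
  then show ?thesis
    by (metis (no_types) sum.inter_filter[OF finite_words[OF assms(1)]])
qed

lemma probF_words: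
  "probF m n Smin Smax F \<Omega> = (\<Sum>w\<in>words {..<m} n.
     if sort (map (Spt m Smin Smax) w) \<in> \<Omega> then \<Prod>i<n. F (w ! i) else 0)"
  by (simp add: probF_def words_def)

lemma prod_nonneg_words:
  assumes "F \<in> distrs m" "w \<in> words {..<m} n"
  shows "0 \<le> (\<Prod>i<n. F (w ! i))"
proof (rule prod_nonneg)
  fix i assume "i \<in> {..<n}"
  then have "w ! i < m"
    using assms(2) nth_mem by (fastforce simp: words_def)
  then show "0 \<le> F (w ! i)"
    using assms(1) by (simp add: distrs_def)
qed

lemma probF_complement:
  assumes "F \<in> distrs m"
  shows "probF m n Smin Smax F \<Omega> = 1 - (\<Sum>w\<in>words {..<m} n.
           if sort (map (Spt m Smin Smax) w) \<notin> \<Omega> then \<Prod>i<n. F (w ! i) else 0)"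
proof -
  have total: "(\<Sum>w\<in>words {..<m} n. \<Prod>i<n. F (w ! i)) = 1"
    using assms by (simp add: sum_prod_words distrs_def)
  show ?thesis
    unfolding probF_words total[symmetric] sum_subtractf[symmetric]
    by (rule sum.cong) auto
qed

lemma probF_le_if_words_outside:
  assumes "F \<in> distrs m" "B \<subseteq> {..<m}"
    and "\<And>w. w \<in> words B n \<Longrightarrow> sort (map (Spt m Smin Smax) w) \<notin> \<Omega>"
  shows "probF m n Smin Smax F \<Omega> \<le> 1 - sum F B ^ n"
proof -
  have "sum F B ^ n
      = (\<Sum>w\<in>words {..<m} n. if set w \<subseteq> B then \<Prod>i<n. F (w ! i) else 0)"
    using assms(2) by (simp add: sum_words_subset sum_prod_words finite_subset)
  also have "\<dots> \<le> (\<Sum>w\<in>words {..<m} n.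
      if sort (map (Spt m Smin Smax) w) \<notin> \<Omega> then \<Prod>i<n. F (w ! i) else 0)"
    using assms prod_nonneg_words[OF assms(1)] by (intro sum_mono) (auto simp: words_def)
  finally show ?thesis
    unfolding probF_complement[OF assms(1)] by simp
qed

lemma probF_ge_if_outside_words:
  assumes "F \<in> distrs m" "B \<subseteq> {..<m}"
    and "\<And>i. i < m \<Longrightarrow> i \<notin> A \<Longrightarrow> F i = 0"
    and "\<And>w. w \<in> words A n \<Longrightarrow> sort (map (Spt m Smin Smax) w) \<notin> \<Omega> \<Longrightarrow> set w \<subseteq> B"
  shows "1 - sum F B ^ n \<le> probF m n Smin Smax F \<Omega>"
proof -
  have "(\<Sum>w\<in>words {..<m} n.
        if sort (map (Spt m Smin Smax) w) \<notin> \<Omega> then \<Prod>i<n. F (w ! i) else 0)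
      \<le> (\<Sum>w\<in>words {..<m} n. if set w \<subseteq> B then \<Prod>i<n. F (w ! i) else 0)"
  proof (rule sum_mono)
    fix w assume w: "w \<in> words {..<m} n"
    show "(if sort (map (Spt m Smin Smax) w) \<notin> \<Omega> then \<Prod>i<n. F (w ! i) else 0)
        \<le> (if set w \<subseteq> B then \<Prod>i<n. F (w ! i) else 0)"
    proof (cases "set w \<subseteq> A")
      case True
      then show ?thesis
        using w assms(4) prod_nonneg_words[OF assms(1) w] by (auto simp: words_def)
    next
      case False
      then obtain x where "x \<in> set w" "x \<notin> A" by blast
      then obtain i where i: "i < n" "w ! i \<notin> A"
        using w by (auto simp: words_def in_set_conv_nth)
      moreover have "w ! i < m"
        using i w nth_mem by (fastforce simp: words_def)
      ultimately have "(\<Prod>i<n. F (w ! i)) = 0"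
        using assms(3) by (intro prod_zero) auto
      then show ?thesis by (simp del: prod_zero_iff)
    qed
  qed
  also have "\<dots> = sum F B ^ n"
    using assms(2) by (simp add: sum_words_subset sum_prod_words finite_subset)
  finally show ?thesis
    unfolding probF_complement[OF assms(1)] by simp
qed

section \<open>Support points and the high lexicographic order\<close>

lemma Spt_0 [simp]: "Spt m Smin Smax 0 = Smin"
  by (simp add: Spt_def)

lemma Spt_mono:
  assumes "1 \<le> m" "Smin \<le> Smax" "i \<le> j"
  shows "Spt m Smin Smax i \<le> Spt m Smin Smax j"
  using assms unfolding Spt_def
  by (intro add_left_mono divide_right_mono mult_right_mono) auto

lemma Spt_strict_mono:
  assumes "2 \<le> m" "Smin < Smax" "i < j"
  shows "Spt m Smin Smax i < Spt m Smin Smax j"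
  using assms unfolding Spt_def
  by (intro add_strict_left_mono divide_strict_right_mono mult_strict_right_mono) auto

lemma not_le_Th_replicate_if_below:
  assumes "0 < n" "length y = n" "\<And>v. v \<in> set y \<Longrightarrow> v < c"
  shows "\<not> le_Th n (replicate n c) y"
proof -
  have below: "y ! j < c" if "j < n" for j
    using assms that by simp
  then have "replicate n c \<noteq> y"
    using assms(1) by fastforce
  moreover have "\<not> replicate n c ! j < y ! j" if "j < n" for j
    using below[OF that] that by simp
  ultimately show ?thesis
    unfolding le_Th_def by blast
qed

lemma le_Th_replicate_if_above:
  assumes "0 < n" "length y = n" "sorted y" "v \<in> set y" "c < v"
  shows "le_Th n (replicate n c) y"
proof -
  obtain i where i: "i < n" "y ! i = v"
    using assms(2,4) by (auto simp: in_set_conv_nth)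
  have "y ! i \<le> y ! (n - 1)"
    using i assms(1-3) by (intro sorted_nth_mono) auto
  then show ?thesis
    using i assms(1,5) unfolding le_Th_def by (intro disjI2 exI[of _ "n - 1"]) auto
qed

section \<open>The lower bound\<close>

lemma mean_ge_mass_below:
  assumes "F \<in> distrs m" "1 \<le> m" "Smin \<le> Smax" "k \<le> m"
  shows "Smin * sum F {..<k} + Spt m Smin Smax k * (1 - sum F {..<k}) \<le> mean m Smin Smax F"
proof -
  let ?S = "Spt m Smin Smax"
  have F_nonneg: "0 \<le> F i" if "i < m" for i
    using assms(1) that by (simp add: distrs_def)
  have "sum F {..<k} + sum F {k..<m} = 1"
    using assms(1,4) by (simp add: distrs_def lessThan_atLeast0 sum.atLeastLessThan_concat)
  then have "Smin * sum F {..<k} + ?S k * (1 - sum F {..<k})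
      = sum F {..<k} * Smin + sum F {k..<m} * ?S k"
    by (simp add: mult.commute)
  also have "\<dots> = (\<Sum>i<k. F i * Smin) + (\<Sum>i=k..<m. F i * ?S k)"
    by (simp add: sum_distrib_right)
  also have "\<dots> \<le> (\<Sum>i<k. F i * ?S i) + (\<Sum>i=k..<m. F i * ?S i)"
    using assms(2-4) F_nonneg Spt_mono[of m Smin Smax 0] Spt_mono[of m Smin Smax k]
    by (intro add_mono sum_mono mult_left_mono) auto
  also have "\<dots> = mean m Smin Smax F"
    using assms(4) by (simp add: mean_def lessThan_atLeast0 sum.atLeastLessThan_concat)
  finally show ?thesis .
qed

lemma mass_below_lt_if_in_Gset:
  assumes "2 \<le> m" "Smin < Smax" "0 < n" "k \<le> m" "0 \<le> r" "r ^ n = 1 - \<alpha>"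
    and "G \<in> Gset m n Smin Smax (OmegaTh m n Smin Smax (replicate n (Spt m Smin Smax k))) \<alpha>"
  shows "sum G {..<k} < r"
proof -
  let ?\<Omega> = "OmegaTh m n Smin Smax (replicate n (Spt m Smin Smax k))"
  have G: "G \<in> distrs m" "\<alpha> < probF m n Smin Smax G ?\<Omega>"
    using assms(7) by (auto simp: Gset_def)
  have "sort (map (Spt m Smin Smax) w) \<notin> ?\<Omega>" if w: "w \<in> words {..<k} n" for w
  proof -
    have "v < Spt m Smin Smax k" if "v \<in> set (sort (map (Spt m Smin Smax) w))" for v
      using that w assms(1,2) Spt_strict_mono[of m Smin Smax _ k] by (auto simp: words_def)
    then have "\<not> le_Th n (replicate n (Spt m Smin Smax k)) (sort (map (Spt m Smin Smax) w))"
      using w assms(3) by (intro not_le_Th_replicate_if_below) (auto simp: words_def)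
    then show ?thesis
      by (simp add: OmegaTh_def)
  qed
  then have "probF m n Smin Smax G ?\<Omega> \<le> 1 - sum G {..<k} ^ n"
    using G(1) assms(4) by (intro probF_le_if_words_outside) auto
  then have "sum G {..<k} ^ n < r ^ n"
    using G(2) assms(6) by simp
  then show ?thesis
    using assms(5) by (rule power_less_imp_less_base)
qed

lemma mean_ge_on_Gset:
  assumes "2 \<le> m" "Smin < Smax" "0 < n" "k \<le> m" "0 \<le> r" "r ^ n = 1 - \<alpha>"
    and "G \<in> Gset m n Smin Smax (OmegaTh m n Smin Smax (replicate n (Spt m Smin Smax k))) \<alpha>"
  shows "Smin * r + Spt m Smin Smax k * (1 - r) \<le> mean m Smin Smax G"
proof -
  let ?a = "sum G {..<k}"
  have "?a < r"
    using assms by (rule mass_below_lt_if_in_Gset)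
  moreover have "Smin \<le> Spt m Smin Smax k"
    using assms(1,2) Spt_mono[of m Smin Smax 0 k] by simp
  ultimately have "0 \<le> (Spt m Smin Smax k - Smin) * (r - ?a)"
    by simp
  then have "Smin * r + Spt m Smin Smax k * (1 - r) \<le> Smin * ?a + Spt m Smin Smax k * (1 - ?a)"
    by (simp add: algebra_simps)
  also have "\<dots> \<le> mean m Smin Smax G"
    using assms(1,2,4,7) by (intro mean_ge_mass_below) (auto simp: Gset_def)
  finally show ?thesis .
qed

lemma mean_diff_le_L2_set:
  "\<bar>mean m Smin Smax F - mean m Smin Smax G\<bar>
     \<le> L2_set (\<lambda>i. F i - G i) {..<m} * L2_set (Spt m Smin Smax) {..<m}"
proof -
  have "\<bar>mean m Smin Smax F - mean m Smin Smax G\<bar> = \<bar>\<Sum>i<m. (F i - G i) * Spt m Smin Smax i\<bar>"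
    by (simp add: mean_def sum_subtractf left_diff_distrib)
  also have "\<dots> \<le> (\<Sum>i<m. \<bar>(F i - G i) * Spt m Smin Smax i\<bar>)"
    by (rule sum_abs)
  also have "\<dots> = (\<Sum>i<m. \<bar>F i - G i\<bar> * \<bar>Spt m Smin Smax i\<bar>)"
    by (simp add: abs_mult)
  also have "\<dots> \<le> L2_set (\<lambda>i. F i - G i) {..<m} * L2_set (Spt m Smin Smax) {..<m}"
    by (rule L2_set_mult_ineq)
  finally show ?thesis .
qed

lemma mean_ge_on_Fset:
  assumes "\<And>G. G \<in> Gset m n Smin Smax \<Omega> \<alpha> \<Longrightarrow> L \<le> mean m Smin Smax G"
    and "F \<in> Fset m n Smin Smax \<Omega> \<alpha>"
  shows "L \<le> mean m Smin Smax F"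
proof (rule field_le_epsilon)
  fix e :: real assume "0 < e"
  define C where "C = L2_set (Spt m Smin Smax) {..<m} + 1"
  have "0 < C"
    by (simp add: C_def add_nonneg_pos)
  with \<open>0 < e\<close> have "0 < e / C"
    by simp
  then obtain G where G: "G \<in> Gset m n Smin Smax \<Omega> \<alpha>"
    and close: "sqrt (\<Sum>i<m. (F i - G i)\<^sup>2) < e / C"
    using assms(2) unfolding Fset_def by blast
  have "mean m Smin Smax G - mean m Smin Smax F \<le> L2_set (\<lambda>i. F i - G i) {..<m} * (C - 1)"
    using abs_le_D2[OF mean_diff_le_L2_set[of m Smin Smax F G]] by (simp add: C_def)
  also have "\<dots> \<le> e / C * (C - 1)"
    using close by (intro mult_right_mono) (auto simp: C_def L2_set_def sum_nonneg)
  also have "\<dots> \<le> e"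
    using \<open>0 < C\<close> \<open>0 < e\<close> by (simp add: field_simps)
  finally show "L \<le> mean m Smin Smax F + e"
    using assms(1)[OF G] by simp
qed

section \<open>The upper bound\<close>

definition two_point :: "nat \<Rightarrow> nat \<Rightarrow> real \<Rightarrow> nat \<Rightarrow> real" where
  "two_point i j p l = (if l = i then p else if l = j then 1 - p else 0)"

lemma sum_two_deltas:
  fixes i j m :: nat and a b :: real
  assumes "i < m" "j < m" "i \<noteq> j"
  shows "(\<Sum>l<m. if l = i then a else if l = j then b else 0) = a + b"
proof -
  have "(\<Sum>l<m. if l = i then a else if l = j then b else 0)
      = (\<Sum>l<m. (if l = i then a else 0) + (if l = j then b else 0))"
    using assms(3) by (intro sum.cong) auto
  also have "\<dots> = a + b"
    using assms(1,2) by (simp add: sum.distrib)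
  finally show ?thesis .
qed

lemma two_point_in_distrs:
  assumes "i < m" "j < m" "i \<noteq> j" "0 \<le> p" "p \<le> 1"
  shows "two_point i j p \<in> distrs m"
proof -
  have "(\<Sum>l<m. two_point i j p l) = 1"
    using sum_two_deltas[OF assms(1-3), of p "1 - p"] by (simp add: two_point_def)
  moreover have "0 \<le> two_point i j p l" for l
    using assms(4,5) by (simp add: two_point_def)
  moreover have "two_point i j p l = 0" if "m \<le> l" for l
    using assms(1,2) that by (simp add: two_point_def)
  ultimately show ?thesis
    unfolding distrs_def by blast
qed

lemma mean_two_point:
  assumes "i < m" "j < m" "i \<noteq> j"
  shows "mean m Smin Smax (two_point i j p)
           = p * Spt m Smin Smax i + (1 - p) * Spt m Smin Smax j"
proof -
  have "mean m Smin Smax (two_point i j p) = (\<Sum>l<m.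
      if l = i then p * Spt m Smin Smax i else if l = j then (1 - p) * Spt m Smin Smax j else 0)"
    unfolding mean_def by (intro sum.cong) (auto simp: two_point_def)
  then show ?thesis
    by (simp only: sum_two_deltas[OF assms])
qed

lemma L2_set_two_point_diff:
  assumes "i < m" "j < m" "i \<noteq> j"
  shows "L2_set (\<lambda>l. two_point i j p l - two_point i j q l) {..<m} = sqrt 2 * \<bar>p - q\<bar>"
proof -
  have "(\<Sum>l<m. (two_point i j p l - two_point i j q l)\<^sup>2)
      = (\<Sum>l<m. if l = i then (p - q)\<^sup>2 else if l = j then (p - q)\<^sup>2 else 0)"
    by (intro sum.cong) (auto simp: two_point_def power2_commute)
  also have "\<dots> = 2 * (p - q)\<^sup>2"
    using sum_two_deltas[OF assms] by simp
  finally have "L2_set (\<lambda>l. two_point i j p l - two_point i j q l) {..<m} = sqrt (2 * (p - q)\<^sup>2)"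
    unfolding L2_set_def by (rule arg_cong)
  also have "\<dots> = sqrt 2 * \<bar>p - q\<bar>"
    by (simp add: real_sqrt_mult)
  finally show ?thesis .
qed

lemma two_point_in_Gset:
  assumes "2 \<le> m" "Smin < Smax" "0 < n" "k + 1 < m"
    and "0 \<le> p" "p \<le> 1" "p ^ n < 1 - \<alpha>"
  shows "two_point 0 (k + 1) p
           \<in> Gset m n Smin Smax (OmegaTh m n Smin Smax (replicate n (Spt m Smin Smax k))) \<alpha>"
proof -
  let ?S = "Spt m Smin Smax"
  let ?\<Omega> = "OmegaTh m n Smin Smax (replicate n (?S k))"
  have F: "two_point 0 (k + 1) p \<in> distrs m"
    using assms by (intro two_point_in_distrs) auto
  have "sort (map ?S w) \<in> ?\<Omega>" if w: "w \<in> words {..<m} n" "k + 1 \<in> set w" for w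
  proof -
    have "sort (map ?S w) \<in> samples m n Smin Smax"
      using w(1) by (auto simp: samples_def words_def)
    moreover have "le_Th n (replicate n (?S k)) (sort (map ?S w))"
      using w assms(1-3) Spt_strict_mono[of m Smin Smax k "k + 1"]
      by (intro le_Th_replicate_if_above[where v = "?S (k + 1)"]) (auto simp: words_def)
    ultimately show ?thesis
      by (simp add: OmegaTh_def)
  qed
  then have "set w \<subseteq> {0}" if "w \<in> words {0, k + 1} n" "sort (map ?S w) \<notin> ?\<Omega>" for w
    using that assms(4) by (auto simp: words_def)
  then have "1 - sum (two_point 0 (k + 1) p) {0} ^ n \<le> probF m n Smin Smax (two_point 0 (k + 1) p) ?\<Omega>"
    using assms(4) by (intro probF_ge_if_outside_words[OF F, where A = "{0, k + 1}"])
      (auto simp: two_point_def)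
  then show ?thesis
    using F assms(7) by (simp add: Gset_def two_point_def)
qed

lemma two_point_in_Fset:
  assumes "2 \<le> m" "Smin < Smax" "0 < n" "k + 1 < m"
    and "0 < r" "r \<le> 1" "r ^ n = 1 - \<alpha>"
  shows "two_point 0 (k + 1) r
           \<in> Fset m n Smin Smax (OmegaTh m n Smin Smax (replicate n (Spt m Smin Smax k))) \<alpha>"
  unfolding Fset_def
proof (intro CollectI conjI allI impI)
  fix l :: nat assume "m \<le> l"
  then show "two_point 0 (k + 1) r l = 0"
    using assms(4) by (simp add: two_point_def)
next
  fix e :: real assume "0 < e"
  define p where "p = r - min (e / 2) r"
  have p: "0 \<le> p" "p < r" "r - p \<le> e / 2"
    using \<open>0 < e\<close> assms(5) by (auto simp: p_def)
  then have "p ^ n < 1 - \<alpha>"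
    using assms(3,7) by (metis power_strict_mono)
  then have "two_point 0 (k + 1) p
      \<in> Gset m n Smin Smax (OmegaTh m n Smin Smax (replicate n (Spt m Smin Smax k))) \<alpha>"
    using assms(1-4,6) p by (intro two_point_in_Gset) auto
  moreover have "sqrt (\<Sum>l<m. (two_point 0 (k + 1) r l - two_point 0 (k + 1) p l)\<^sup>2) < e"
  proof -
    have "sqrt (\<Sum>l<m. (two_point 0 (k + 1) r l - two_point 0 (k + 1) p l)\<^sup>2) = sqrt 2 * (r - p)"
      using L2_set_two_point_diff[of 0 m "k + 1" r p] assms(4) p(2) by (simp add: L2_set_def)
    also have "\<dots> \<le> sqrt 2 * (e / 2)"
      using p(3) by (intro mult_left_mono) auto
    also have "\<dots> < e"
      using \<open>0 < e\<close> sqrt2_less_2 by simp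
    finally show ?thesis .
  qed
  ultimately show "\<exists>G\<in>Gset m n Smin Smax (OmegaTh m n Smin Smax (replicate n (Spt m Smin Smax k))) \<alpha>.
      sqrt (\<Sum>l<m. (two_point 0 (k + 1) r l - G l)\<^sup>2) < e"
    by blast
qed

theorem lemma8:
  fixes m n k :: nat and Smin Smax \<alpha> :: real
  assumes "m \<ge> 3" and "n \<ge> 1" and "Smin < Smax"
    and "0 \<le> \<alpha>" and "\<alpha> < 1"
    and "1 \<le> k" and "k \<le> m - 2"
  shows "Smin * root n (1 - \<alpha>) + Spt m Smin Smax k * (1 - root n (1 - \<alpha>))
           \<le> Bstar m n Smin Smax \<alpha> (replicate n (Spt m Smin Smax k))
       \<and> Bstar m n Smin Smax \<alpha> (replicate n (Spt m Smin Smax k))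
           \<le> Smin * root n (1 - \<alpha>) + Spt m Smin Smax (k + 1) * (1 - root n (1 - \<alpha>))"
proof -
  let ?r = "root n (1 - \<alpha>)"
  let ?F = "Fset m n Smin Smax (OmegaTh m n Smin Smax (replicate n (Spt m Smin Smax k))) \<alpha>"
  have setting: "2 \<le> m" "0 < n" "k \<le> m" "k + 1 < m"
    using assms(1,2,7) by auto
  have r: "0 \<le> ?r" "0 < ?r" "?r \<le> 1" "?r ^ n = 1 - \<alpha>"
    using setting(2) assms(4,5) real_root_le_iff[of n "1 - \<alpha>" 1]
    by (simp_all add: real_root_gt_zero)
  have lower: "Smin * ?r + Spt m Smin Smax k * (1 - ?r) \<le> mean m Smin Smax F" if "F \<in> ?F" for F
    using mean_ge_on_Fset[OF mean_ge_on_Gset[OF setting(1) assms(3) setting(2,3) r(1,4)] that] .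
  have witness: "two_point 0 (k + 1) ?r \<in> ?F"
    using two_point_in_Fset[OF setting(1) assms(3) setting(2,4) r(2-4)] .
  have upper: "mean m Smin Smax (two_point 0 (k + 1) ?r)
      = Smin * ?r + Spt m Smin Smax (k + 1) * (1 - ?r)"
    using mean_two_point[of 0 m "k + 1" Smin Smax ?r] setting(4) by (simp add: mult.commute)
  show ?thesis
    unfolding Bstar_def
  proof
    show "Smin * ?r + Spt m Smin Smax k * (1 - ?r) \<le> Inf (mean m Smin Smax ` ?F)"
      using witness lower by (intro cInf_greatest) auto
    show "Inf (mean m Smin Smax ` ?F) \<le> Smin * ?r + Spt m Smin Smax (k + 1) * (1 - ?r)"
      unfolding upper[symmetric] using witness lower by (intro cInf_lower bdd_belowI2) auto
  qed
qed

end
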